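(* There is an absolute constant $C>0$ such that the following holds. Let $G(V,E)$ be a graph with nonnegative edge weights $w$, let $k\ge c\ge 2$ be integers, and let $G^{(1)},\ldots,G^{(k)}$ be a random $k$-clustering of $G$ with expected multiplicity $c$. Fix a permutation $\pi$ of $E$ in non-increasing order of weight, and for each $i\in[k]$ let $M_i := \mathsf{Greedy}(G^{(i)},\pi_i)$, where $\pi_i$ is the restriction of $\pi$ to the edges of $G^{(i)}$. Let $H$ be the graph on $V$ with edge set $\bigcup_{i=1}^k M_i$. Then $$\mathbb{E}[\mathrm{opt}(H)] \geq \left(\frac12 - C\cdot\frac{\log c}{c}\right)\cdot \mathrm{opt}(G).$$
   Context: $\mathrm{opt}(\cdot)$ denotes the weight of a maximum weight matching. For a graph and an ordering $\pi$ of its edges, $\mathsf{Greedy}(G,\pi)$ scans the edges in the order $\pi$ and adds an edge $(u,v)$ to the matching iff neither $u$ nor $v$ is already matched. A random $k$-clustering of $E$ with expected multiplicity $c$: independently for each edge $e$, draw $c_e\sim\mathrm{Bin}(k,c/k)$ and put $e$ into $c_e$ distinct sets among $E^{(1)},\ldots,E^{(k)}$ chosen uniformly at random; $G^{(i)}:=G(V,E^{(i)})$. The expectation is over the random clustering. *)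

theory Defs
  imports "HOL-Probability.Probability"
begin

definition simple_graph_on :: "'a set \<Rightarrow> 'a set set \<Rightarrow> bool" where
  "simple_graph_on V E \<longleftrightarrow> finite V \<and>
     E \<subseteq> {e. \<exists>u v. u \<in> V \<and> v \<in> V \<and> u \<noteq> v \<and> e = {u, v}}"

definition is_matching :: "'a set set \<Rightarrow> bool" where
  "is_matching M \<longleftrightarrow> (\<forall>e\<in>M. \<forall>f\<in>M. e \<noteq> f \<longrightarrow> e \<inter> f = {})"

definition opt :: "('a set \<Rightarrow> real) \<Rightarrow> 'a set set \<Rightarrow> real" where
  "opt w E = Max ((\<lambda>M. sum w M) ` {M. M \<subseteq> E \<and> is_matching M})"

fun greedy_aux :: "'a set list \<Rightarrow> 'a set set \<Rightarrow> 'a set set" where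
  "greedy_aux [] M = M"
| "greedy_aux (e # es) M = greedy_aux es (if e \<inter> \<Union>M = {} then insert e M else M)"

definition greedy :: "'a set list \<Rightarrow> 'a set set" where
  "greedy \<pi> = greedy_aux \<pi> {}"

definition cluster_set_pmf :: "nat \<Rightarrow> nat \<Rightarrow> nat set pmf" where
  "cluster_set_pmf k c =
     bind_pmf (binomial_pmf k (real c / real k))
       (\<lambda>m. pmf_of_set {S. S \<subseteq> {..<k} \<and> card S = m})"

text \<open>Random k-clustering with expected multiplicity c: independent over edges.
  An outcome assigns to each edge e the set of indices i with e in E^(i).\<close>
definition random_clustering :: "'a set set \<Rightarrow> nat \<Rightarrow> nat \<Rightarrow> ('a set \<Rightarrow> nat set) pmf" where
  "random_clustering E k c = Pi_pmf E {} (\<lambda>_. cluster_set_pmf k c)"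

definition greedy_union :: "'a set list \<Rightarrow> nat \<Rightarrow> ('a set \<Rightarrow> nat set) \<Rightarrow> 'a set set" where
  "greedy_union \<pi> k S = (\<Union>i<k. greedy (filter (\<lambda>e. i \<in> S e) \<pi>))"

end

theory Submission
  imports Defs
begin

(* Let N be a maximum weight matching of G and M_i the greedy matching of cluster i.  Call an
   edge f free in cluster i if greedy on G^(i) has not covered an endpoint of f when it reaches f.
   For fixed i, every f in N that is not free in cluster i, or is free and lies in G^(i), meets an
   edge of M_i of at least its weight.  Charging these edges to M_i, and exchanging the edges of
   M_i that meet the free edges of N lying in H but not in G^(i) for those edges, gives
   w(N) <= 2 opt(H) + w{f in N - H. f free in cluster i}.
   Averaging over i, an edge f in N - H loses w(f) times the fraction x of clusters in which it is
   free, and f misses H only if it lies in none of these clusters.  They are determined by the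
   clusters of the edges before f, hence independent of those of f, so the expected loss is at
   most x (1 - c x / k)^k <= x exp(-c x) <= 1/c times w(f).  Thus E opt(H) >= (1 - 1/c)/2 opt(G). *)

lemma greedy_aux_mono: "M \<subseteq> greedy_aux es M"
  by (induction es arbitrary: M) (auto, blast)

lemma greedy_aux_subset: "greedy_aux es M \<subseteq> M \<union> set es"
  by (induction es arbitrary: M) (auto simp: subset_iff)

lemma greedy_aux_append: "greedy_aux (es @ fs) M = greedy_aux fs (greedy_aux es M)"
  by (induction es arbitrary: M) auto

lemma is_matching_greedy_aux: "is_matching M \<Longrightarrow> is_matching (greedy_aux es M)"
proof (induction es arbitrary: M)
  case (Cons e es)
  have "is_matching (if e \<inter> \<Union>M = {} then insert e M else M)"
    using Cons.prems unfolding is_matching_def by auto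
  then show ?case using Cons.IH by simp
qed simp

lemma is_matching_greedy: "is_matching (greedy es)"
  unfolding greedy_def by (rule is_matching_greedy_aux) (simp add: is_matching_def)

lemma greedy_subset: "greedy es \<subseteq> set es"
  unfolding greedy_def using greedy_aux_subset[of es "{}"] by simp

lemma greedy_append_mono: "greedy es \<subseteq> greedy (es @ fs)"
  unfolding greedy_def greedy_aux_append by (rule greedy_aux_mono)

lemma greedy_append_Cons: "f \<inter> \<Union>(greedy es) = {} \<Longrightarrow> f \<in> greedy (es @ f # fs)"
  unfolding greedy_def greedy_aux_append using greedy_aux_mono by fastforce

lemma finite_matchings: "finite E \<Longrightarrow> finite {M. M \<subseteq> E \<and> is_matching M}"
  by simp

lemma sum_le_opt:
  assumes "finite E" "M \<subseteq> E" "is_matching M"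
  shows "sum w M \<le> opt w E"
proof -
  have "sum w M \<in> sum w ` {M. M \<subseteq> E \<and> is_matching M}" using assms(2,3) by blast
  then show ?thesis
    unfolding opt_def by (rule Max_ge[OF finite_imageI[OF finite_matchings[OF assms(1)]]])
qed

lemma opt_nonneg: "finite E \<Longrightarrow> 0 \<le> opt w E"
  using sum_le_opt[of E "{}" w] by (simp add: is_matching_def)

lemma opt_attained:
  assumes "finite E"
  obtains M where "M \<subseteq> E" "is_matching M" "sum w M = opt w E"
proof -
  have "{} \<in> {M. M \<subseteq> E \<and> is_matching M}" by (simp add: is_matching_def)
  then have "sum w ` {M. M \<subseteq> E \<and> is_matching M} \<noteq> {}" by blast
  then have "opt w E \<in> sum w ` {M. M \<subseteq> E \<and> is_matching M}"
    unfolding opt_def by (rule Max_in[OF finite_imageI[OF finite_matchings[OF assms]]])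
  then obtain M where "M \<subseteq> E" "is_matching M" "opt w E = sum w M" by auto
  then show ?thesis using that by simp
qed

lemma card_matching_meets_edge:
  assumes "is_matching M" "card g = 2"
  shows "card {f\<in>M. f \<inter> g \<noteq> {}} \<le> 2"
proof -
  let ?T = "{f\<in>M. f \<inter> g \<noteq> {}}"
  define v where "v f = (SOME x. x \<in> f \<inter> g)" for f
  have v: "v f \<in> f \<inter> g" if "f \<in> ?T" for f
    unfolding v_def by (rule someI_ex) (use that in blast)
  have "inj_on v ?T"
  proof (rule inj_onI)
    fix f f' assume f: "f \<in> ?T" and f': "f' \<in> ?T" and "v f = v f'"
    then have "v f \<in> f \<inter> f'" using v[OF f] v[OF f'] by simp
    then show "f = f'" using f f' assms(1) unfolding is_matching_def by blast
  qed
  moreover have "v ` ?T \<subseteq> g" using v by blast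
  moreover have "finite g" using assms(2) card.infinite by fastforce
  ultimately have "card ?T \<le> card g" by (intro card_inj_on_le)
  then show ?thesis using assms(2) by simp
qed

section \<open>Charging against a dominating matching\<close>

lemma sum_dominated_le_matching:
  fixes w :: "'a set \<Rightarrow> real"
  assumes M: "finite M" "\<forall>g\<in>M. card g = 2 \<and> 0 \<le> w g"
    and Ms: "is_matching Ms" "finite Ms" "B \<subseteq> Ms" "F \<subseteq> Ms" "B \<inter> F = {}"
    and dominated: "\<And>f. f \<in> B \<Longrightarrow> \<exists>g\<in>M. g \<inter> f \<noteq> {} \<and> w f \<le> w g"
  shows "sum w B \<le> 2 * sum w M - sum w {g\<in>M. \<exists>f\<in>F. g \<inter> f \<noteq> {}}"
proof -
  define R where "R = {g\<in>M. \<exists>f\<in>F. g \<inter> f \<noteq> {}}"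
  obtain \<beta> where \<beta>: "\<And>f. f \<in> B \<Longrightarrow> \<beta> f \<in> M \<and> \<beta> f \<inter> f \<noteq> {} \<and> w f \<le> w (\<beta> f)"
    using dominated by metis
  \<comment> \<open>g meets at most two edges of Ms, and one of them lies in F if g \<in> R\<close>
  have fiber: "card {f\<in>B. \<beta> f = g} \<le> (if g \<in> R then 1 else 2)" if "g \<in> M" for g
  proof -
    define T where "T = {f\<in>Ms. f \<inter> g \<noteq> {}}"
    have "finite T" using Ms(2) unfolding T_def by simp
    have "{f\<in>B. \<beta> f = g} \<subseteq> T - F"
      using \<beta> Ms(3,5) unfolding T_def by blast
    then have "card {f\<in>B. \<beta> f = g} + card (T \<inter> F) \<le> card T"
      using \<open>finite T\<close> card_Int_Diff[OF \<open>finite T\<close>, of F] card_mono[of "T - F"] by fastforce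
    moreover have "card T \<le> 2"
      unfolding T_def using card_matching_meets_edge[OF Ms(1)] M(2) that by blast
    moreover have "1 \<le> card (T \<inter> F)" if "g \<in> R"
    proof -
      have "T \<inter> F \<noteq> {}" using that Ms(4) unfolding R_def T_def by blast
      then show ?thesis using \<open>finite T\<close> by (simp add: Suc_le_eq card_gt_0_iff)
    qed
    ultimately show ?thesis by auto
  qed
  have "sum w B \<le> (\<Sum>f\<in>B. w (\<beta> f))"
    using \<beta> by (intro sum_mono) blast
  also have "\<dots> = (\<Sum>g\<in>M. real (card {f\<in>B. \<beta> f = g}) * w g)"
    using \<beta> M(1) Ms(2,3) finite_subset by (subst sum.group[symmetric]) (auto intro: sum.cong)
  also have "\<dots> \<le> (\<Sum>g\<in>M. (if g \<in> R then 1 else 2) * w g)"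
  proof (intro sum_mono mult_right_mono)
    fix g assume "g \<in> M"
    then show "real (card {f\<in>B. \<beta> f = g}) \<le> (if g \<in> R then 1 else 2)"
      using fiber[of g] by (cases "g \<in> R") simp_all
    show "0 \<le> w g" using \<open>g \<in> M\<close> M(2) by blast
  qed
  also have "\<dots> = 2 * sum w M - sum w R"
  proof -
    have "R \<subseteq> M" unfolding R_def by blast
    have "(\<Sum>g\<in>M. (if g \<in> R then 1 else 2) * w g) = (\<Sum>g\<in>M. 2 * w g - (if g \<in> R then w g else 0))"
      by (rule sum.cong) simp_all
    also have "\<dots> = 2 * sum w M - sum w R"
      using M(1) \<open>R \<subseteq> M\<close> by (simp add: sum_subtractf sum_distrib_left[symmetric] sum.If_cases Int_absorb1)
    finally show ?thesis .
  qed
  finally show ?thesis unfolding R_def .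
qed

lemma is_matching_exchange:
  assumes "is_matching M" "is_matching F"
  shows "is_matching ((M - {g\<in>M. \<exists>f\<in>F. g \<inter> f \<noteq> {}}) \<union> F)"
  using assms unfolding is_matching_def by blast

lemma sum_dominated_plus_sum_le_opt:
  fixes w :: "'a set \<Rightarrow> real"
  assumes H: "finite H" "M \<subseteq> H" "F \<subseteq> H"
    and M: "is_matching M" "\<forall>g\<in>M. card g = 2 \<and> 0 \<le> w g"
    and Ms: "is_matching Ms" "finite Ms" "B \<subseteq> Ms" "F \<subseteq> Ms" "B \<inter> F = {}" "F \<inter> M = {}"
    and dominated: "\<And>f. f \<in> B \<Longrightarrow> \<exists>g\<in>M. g \<inter> f \<noteq> {} \<and> w f \<le> w g"
  shows "sum w B + sum w F \<le> 2 * opt w H"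
proof -
  define R where "R = {g\<in>M. \<exists>f\<in>F. g \<inter> f \<noteq> {}}"
  have "finite M" "finite F" using H finite_subset by blast+
  have "R \<subseteq> M" unfolding R_def by blast
  have "is_matching F" using Ms(1,4) unfolding is_matching_def by blast
  then have "is_matching ((M - R) \<union> F)" unfolding R_def by (rule is_matching_exchange[OF M(1)])
  then have "sum w ((M - R) \<union> F) \<le> opt w H"
    using H by (intro sum_le_opt) auto
  moreover have "sum w ((M - R) \<union> F) = sum w M - sum w R + sum w F"
    using \<open>finite M\<close> \<open>finite F\<close> \<open>R \<subseteq> M\<close> Ms(6) by (subst sum.union_disjoint) (auto simp: sum_diff)
  moreover have "sum w M \<le> opt w H" using H M(1) by (intro sum_le_opt)
  moreover have "sum w B \<le> 2 * sum w M - sum w R"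
    unfolding R_def using \<open>finite M\<close> M(2) Ms(1-5) dominated by (rule sum_dominated_le_matching)
  ultimately show ?thesis by linarith
qed

section \<open>Free clusters\<close>

definition greedy_cluster :: "'a set list \<Rightarrow> ('a set \<Rightarrow> nat set) \<Rightarrow> nat \<Rightarrow> 'a set set" where
  "greedy_cluster \<pi> S i = greedy (filter (\<lambda>e. i \<in> S e) \<pi>)"

definition edges_before :: "'a list \<Rightarrow> 'a \<Rightarrow> 'a list" where
  "edges_before \<pi> f = takeWhile (\<lambda>e. e \<noteq> f) \<pi>"

text \<open>An edge f is free in cluster i if greedy on cluster i has not yet covered an endpoint
  of f when it reaches f; it then takes f iff f lies in cluster i.\<close>

definition free_in_cluster :: "'a set list \<Rightarrow> ('a set \<Rightarrow> nat set) \<Rightarrow> nat \<Rightarrow> 'a set \<Rightarrow> bool" where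
  "free_in_cluster \<pi> S i f \<longleftrightarrow> f \<inter> \<Union>(greedy_cluster (edges_before \<pi> f) S i) = {}"

definition free_clusters :: "'a set list \<Rightarrow> nat \<Rightarrow> ('a set \<Rightarrow> nat set) \<Rightarrow> 'a set \<Rightarrow> nat set" where
  "free_clusters \<pi> k S f = {i. i < k \<and> free_in_cluster \<pi> S i f}"

lemma greedy_union_eq: "greedy_union \<pi> k S = (\<Union>i<k. greedy_cluster \<pi> S i)"
  unfolding greedy_union_def greedy_cluster_def ..

lemma mem_greedy_cluster: "g \<in> greedy_cluster \<pi> S i \<Longrightarrow> g \<in> set \<pi> \<and> i \<in> S g"
  unfolding greedy_cluster_def using greedy_subset by fastforce

lemma greedy_union_subset: "greedy_union \<pi> k S \<subseteq> set \<pi>"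
  unfolding greedy_union_eq using mem_greedy_cluster by blast

lemma edges_before_split:
  assumes "f \<in> set \<pi>"
  obtains fs where "\<pi> = edges_before \<pi> f @ f # fs"
proof -
  obtain es fs where \<pi>: "\<pi> = es @ f # fs" "f \<notin> set es"
    using split_list_first[OF assms] by blast
  then have "edges_before \<pi> f = es"
    unfolding edges_before_def by (subst \<pi>(1), subst takeWhile_append2) auto
  then show ?thesis using that \<pi> by simp
qed

lemma free_in_cluster_imp_mem:
  assumes "f \<in> set \<pi>" "free_in_cluster \<pi> S i f" "i \<in> S f"
  shows "f \<in> greedy_cluster \<pi> S i"
proof -
  obtain fs where "\<pi> = edges_before \<pi> f @ f # fs" using edges_before_split[OF assms(1)] .
  then have "filter (\<lambda>e. i \<in> S e) \<pi> =
      filter (\<lambda>e. i \<in> S e) (edges_before \<pi> f) @ f # filter (\<lambda>e. i \<in> S e) fs"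
    using assms(3) by (metis filter.simps(2) filter_append)
  then show ?thesis
    using assms(2) greedy_append_Cons unfolding free_in_cluster_def greedy_cluster_def by metis
qed

lemma not_free_in_cluster_imp_blocked:
  assumes "f \<in> set \<pi>" "\<not> free_in_cluster \<pi> S i f" "sorted_wrt (\<lambda>e f. w e \<ge> w f) \<pi>"
  shows "\<exists>g\<in>greedy_cluster \<pi> S i. g \<inter> f \<noteq> {} \<and> w f \<le> w g"
proof -
  obtain fs where \<pi>: "\<pi> = edges_before \<pi> f @ f # fs" using edges_before_split[OF assms(1)] .
  obtain g where g: "g \<in> greedy_cluster (edges_before \<pi> f) S i" "g \<inter> f \<noteq> {}"
    using assms(2) unfolding free_in_cluster_def by blast
  have "g \<in> set (edges_before \<pi> f)" using mem_greedy_cluster[OF g(1)] by blast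
  then have "w f \<le> w g" using assms(3) by (subst (asm) (2) \<pi>) (auto simp: sorted_wrt_append)
  moreover have "g \<in> greedy_cluster \<pi> S i"
    using g(1) greedy_append_mono unfolding greedy_cluster_def by (subst \<pi>) (auto simp del: filter.simps)
  ultimately show ?thesis using g(2) by blast
qed

lemma greedy_cluster_dominates:
  fixes w :: "'a set \<Rightarrow> 'b::preorder"
  assumes "f \<in> set \<pi>" "f \<noteq> {}" "sorted_wrt (\<lambda>e f. w e \<ge> w f) \<pi>"
    and "free_in_cluster \<pi> S i f \<Longrightarrow> i \<in> S f"
  shows "\<exists>g\<in>greedy_cluster \<pi> S i. g \<inter> f \<noteq> {} \<and> w f \<le> w g"
proof (cases "free_in_cluster \<pi> S i f")
  case True
  have "f \<in> greedy_cluster \<pi> S i"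
    by (rule free_in_cluster_imp_mem[OF assms(1) True assms(4)[OF True]])
  then show ?thesis using assms(2) by (intro bexI[of _ f]) auto
next
  case False
  show ?thesis by (rule not_free_in_cluster_imp_blocked[OF assms(1) False assms(3)])
qed

lemma free_clusters_fun_upd: "free_clusters \<pi> k (S(f := y)) f = free_clusters \<pi> k S f"
proof -
  have "filter (\<lambda>e. i \<in> (S(f := y)) e) (edges_before \<pi> f) = filter (\<lambda>e. i \<in> S e) (edges_before \<pi> f)" for i
    unfolding edges_before_def by (rule filter_cong) (auto dest: set_takeWhileD)
  then show ?thesis unfolding free_clusters_def free_in_cluster_def greedy_cluster_def by simp
qed

lemma disjoint_free_clusters_if_notin_greedy_union:
  assumes "f \<in> set \<pi>" "f \<notin> greedy_union \<pi> k S"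
  shows "S f \<inter> free_clusters \<pi> k S f = {}"
  using assms free_in_cluster_imp_mem unfolding greedy_union_eq free_clusters_def by blast

lemma sum_matching_le_opt_greedy_union_cluster:
  fixes w :: "'a set \<Rightarrow> real"
  assumes E: "finite E" "\<forall>e\<in>E. card e = 2 \<and> 0 \<le> w e"
    and \<pi>: "set \<pi> = E" "sorted_wrt (\<lambda>e f. w e \<ge> w f) \<pi>"
    and Ms: "Ms \<subseteq> E" "is_matching Ms" and "i < k"
  shows "sum w Ms \<le> 2 * opt w (greedy_union \<pi> k S)
           + sum w {f\<in>Ms - greedy_union \<pi> k S. free_in_cluster \<pi> S i f}"
proof -
  define H where "H = greedy_union \<pi> k S"
  define M where "M = greedy_cluster \<pi> S i"
  define D where "D = {f\<in>Ms. free_in_cluster \<pi> S i f \<and> i \<notin> S f}"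
  have "H \<subseteq> E" unfolding H_def using greedy_union_subset \<pi>(1) by blast
  have "M \<subseteq> H" unfolding M_def H_def greedy_union_eq using \<open>i < k\<close> by blast
  have "finite Ms" using Ms(1) E(1) finite_subset by blast
  have dominated: "\<exists>g\<in>M. g \<inter> f \<noteq> {} \<and> w f \<le> w g" if f: "f \<in> Ms - D" for f
  proof -
    have "f \<in> set \<pi>" using f Ms(1) \<pi>(1) by blast
    moreover have "card f = 2" using f Ms(1) E(2) by blast
    then have "f \<noteq> {}" by auto
    ultimately show ?thesis
      unfolding M_def using \<pi>(2) by (rule greedy_cluster_dominates) (use f in \<open>simp add: D_def\<close>)
  qed
  have "sum w (Ms - D) + sum w (D \<inter> H) \<le> 2 * opt w H"
  proof (rule sum_dominated_plus_sum_le_opt[OF _ \<open>M \<subseteq> H\<close> _ _ _ Ms(2) \<open>finite Ms\<close>])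
    show "finite H" using \<open>H \<subseteq> E\<close> E(1) finite_subset by blast
    show "is_matching M" unfolding M_def greedy_cluster_def by (rule is_matching_greedy)
    show "\<forall>g\<in>M. card g = 2 \<and> 0 \<le> w g" using \<open>M \<subseteq> H\<close> \<open>H \<subseteq> E\<close> E(2) by blast
    show "D \<inter> H \<inter> M = {}" using mem_greedy_cluster unfolding D_def M_def by blast
    show "D \<inter> H \<subseteq> H" "Ms - D \<subseteq> Ms" "(Ms - D) \<inter> (D \<inter> H) = {}" by blast+
    show "D \<inter> H \<subseteq> Ms" unfolding D_def by blast
  qed (rule dominated)
  moreover have "sum w Ms = sum w (Ms - D) + sum w (D \<inter> H) + sum w (D - H)"
  proof -
    have "D \<subseteq> Ms" unfolding D_def by blast
    then have "sum w Ms = sum w (Ms - D) + sum w D" using \<open>finite Ms\<close> by (rule sum.subset_diff)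
    moreover have "sum w D = sum w (D \<inter> H) + sum w (D - H)"
      using \<open>D \<subseteq> Ms\<close> \<open>finite Ms\<close> finite_subset by (intro sum.Int_Diff) blast
    ultimately show ?thesis by simp
  qed
  moreover have "sum w (D - H) \<le> sum w {f\<in>Ms - H. free_in_cluster \<pi> S i f}"
  proof (rule sum_mono2)
    show "finite {f\<in>Ms - H. free_in_cluster \<pi> S i f}" using \<open>finite Ms\<close> by simp
    show "D - H \<subseteq> {f\<in>Ms - H. free_in_cluster \<pi> S i f}" unfolding D_def by blast
    show "0 \<le> w f" if "f \<in> {f\<in>Ms - H. free_in_cluster \<pi> S i f} - (D - H)" for f
      using that Ms(1) E(2) by blast
  qed
  ultimately show ?thesis unfolding H_def by linarith
qed

lemma sum_lessThan_sum_filter: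
  fixes w :: "'a \<Rightarrow> 'b::comm_semiring_1" and k :: nat
  assumes "finite A"
  shows "(\<Sum>i<k. sum w {x\<in>A. P i x}) = (\<Sum>x\<in>A. w x * of_nat (card {i. i < k \<and> P i x}))"
proof -
  have "(\<Sum>i<k. sum w {x\<in>A. P i x}) = (\<Sum>i<k. \<Sum>x\<in>A. if P i x then w x else 0)"
    using assms by (intro sum.cong refl sum.inter_filter)
  also have "\<dots> = (\<Sum>x\<in>A. \<Sum>i<k. if P i x then w x else 0)"
    by (rule sum.swap)
  also have "\<dots> = (\<Sum>x\<in>A. w x * of_nat (card {i. i < k \<and> P i x}))"
  proof (rule sum.cong[OF refl])
    fix x
    have "(\<Sum>i<k. if P i x then w x else 0) = (\<Sum>i\<in>{i\<in>{..<k}. P i x}. w x)"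
      by (rule sum.inter_filter[symmetric]) simp
    also have "{i\<in>{..<k}. P i x} = {i. i < k \<and> P i x}" by auto
    finally show "(\<Sum>i<k. if P i x then w x else 0) = w x * of_nat (card {i. i < k \<and> P i x})"
      by (simp add: mult.commute)
  qed
  finally show ?thesis .
qed

lemma sum_matching_le_opt_greedy_union:
  fixes w :: "'a set \<Rightarrow> real"
  assumes E: "finite E" "\<forall>e\<in>E. card e = 2 \<and> 0 \<le> w e"
    and \<pi>: "set \<pi> = E" "sorted_wrt (\<lambda>e f. w e \<ge> w f) \<pi>"
    and Ms: "Ms \<subseteq> E" "is_matching Ms" and "0 < k"
  shows "sum w Ms \<le> 2 * opt w (greedy_union \<pi> k S)
           + (\<Sum>f\<in>Ms - greedy_union \<pi> k S. w f * real (card (free_clusters \<pi> k S f)) / real k)"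
proof -
  define H where "H = greedy_union \<pi> k S"
  have "finite Ms" using Ms(1) E(1) finite_subset by blast
  have swap: "(\<Sum>i<k. sum w {f\<in>Ms - H. free_in_cluster \<pi> S i f})
      = (\<Sum>f\<in>Ms - H. w f * real (card (free_clusters \<pi> k S f)))"
    unfolding free_clusters_def using \<open>finite Ms\<close> by (intro sum_lessThan_sum_filter) simp
  have "real k * sum w Ms = (\<Sum>i<k. sum w Ms)" by simp
  also have "\<dots> \<le> (\<Sum>i<k. 2 * opt w H + sum w {f\<in>Ms - H. free_in_cluster \<pi> S i f})"
    unfolding H_def by (intro sum_mono sum_matching_le_opt_greedy_union_cluster[OF E \<pi> Ms]) simp
  also have "\<dots> = real k * (2 * opt w H) + (\<Sum>f\<in>Ms - H. w f * real (card (free_clusters \<pi> k S f)))"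
    unfolding sum.distrib swap by simp
  finally have "real k * sum w Ms \<le> real k * (2 * opt w H) + (\<Sum>f\<in>Ms - H. w f * real (card (free_clusters \<pi> k S f)))" .
  moreover have "\<And>x y z. real k * x \<le> real k * y + z \<Longrightarrow> x \<le> y + z / real k"
    using \<open>0 < k\<close> by (simp add: field_simps)
  ultimately show ?thesis
    unfolding H_def sum_divide_distrib[symmetric] by blast
qed

section \<open>Clusters of a single edge avoiding a given set\<close>

lemma binomial_Suc_mult: "Suc m * (n choose Suc m) = (n - m) * (n choose m)"
  by (simp only: binomial_absorption binomial_absorb_comp)

lemma binomial_mult_power_le:
  assumes "a \<le> k"
  shows "real (a choose m) * real k ^ m \<le> real a ^ m * real (k choose m)"
proof (induction m)
  case (Suc m)
  have a: "real (Suc m) * real (a choose Suc m) = real (a - m) * real (a choose m)"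
    by (metis binomial_Suc_mult of_nat_mult)
  have k: "real (Suc m) * real (k choose Suc m) = real (k - m) * real (k choose m)"
    by (metis binomial_Suc_mult of_nat_mult)
  have "real (a - m) * real k \<le> real a * real (k - m)"
  proof (cases "m \<le> a")
    case True
    then have "m \<le> k" using assms by linarith
    then show ?thesis using True assms by (simp add: of_nat_diff algebra_simps mult_right_mono)
  qed simp
  then have "real (Suc m) * (real (a choose Suc m) * real k ^ Suc m)
      \<le> real (Suc m) * (real a ^ Suc m * real (k choose Suc m))"
  proof -
    have "real (Suc m) * (real (a choose Suc m) * real k ^ Suc m)
        = (real (Suc m) * real (a choose Suc m)) * (real k ^ m * real k)"
      by (simp only: power_Suc mult_ac)
    also have "\<dots> = (real (a choose m) * real k ^ m) * (real (a - m) * real k)"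
      by (simp only: a mult_ac)
    also have "\<dots> \<le> (real a ^ m * real (k choose m)) * (real a * real (k - m))"
      using Suc.IH \<open>real (a - m) * real k \<le> real a * real (k - m)\<close> by (rule mult_mono) simp_all
    also have "\<dots> = (real a ^ m * real a) * (real (k - m) * real (k choose m))"
      by (simp only: mult_ac)
    also have "\<dots> = real (Suc m) * (real a ^ Suc m * real (k choose Suc m))"
      unfolding k[symmetric] by (simp only: power_Suc mult_ac)
    finally show ?thesis .
  qed
  then show ?case by (simp only: mult_le_cancel_left_pos of_nat_0_less_iff zero_less_Suc)
qed simp

lemma expectation_pmf_of_subsets_avoid:
  fixes I :: "nat set"
  assumes "I \<subseteq> {..<k}" "m \<le> k" "0 < k"
  shows "measure_pmf.expectation (pmf_of_set {S. S \<subseteq> {..<k} \<and> card S = m}) (\<lambda>S. of_bool (S \<inter> I = {}))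
         \<le> (1 - real (card I) / real k) ^ m"
proof -
  define \<S> where "\<S> = {S. S \<subseteq> {..<k} \<and> card S = m}"
  have "finite \<S>" unfolding \<S>_def by (rule finite_subset[of _ "Pow {..<k}"]) auto
  have "{..<m} \<in> \<S>" using assms(2) unfolding \<S>_def by auto
  then have "\<S> \<noteq> {}" by blast
  have "card I \<le> k" using assms(1) card_mono[of "{..<k}" I] by simp
  have "\<S> \<inter> {S. S \<inter> I = {}} = {S. S \<subseteq> {..<k} - I \<and> card S = m}" unfolding \<S>_def by blast
  moreover have "card ({..<k} - I) = k - card I"
    using assms(1) by (simp add: card_Diff_subset finite_subset)
  ultimately have avoid: "card (\<S> \<inter> {S. S \<inter> I = {}}) = (k - card I) choose m"
    using n_subsets[of "{..<k} - I" m] by simp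
  have "measure_pmf.expectation (pmf_of_set \<S>) (\<lambda>S. of_bool (S \<inter> I = {}))
      = real ((k - card I) choose m) / real (k choose m)"
    using \<open>finite \<S>\<close> \<open>\<S> \<noteq> {}\<close> avoid n_subsets[of "{..<k}" m]
    by (simp add: integral_pmf_of_set \<S>_def)
  also have "\<dots> \<le> (real (k - card I) / real k) ^ m"
    using binomial_mult_power_le[of "k - card I" k m] assms(2,3)
    by (simp add: field_simps power_divide)
  also have "\<dots> = (1 - real (card I) / real k) ^ m"
    using \<open>card I \<le> k\<close> assms(3) by (simp add: of_nat_diff field_simps)
  finally show ?thesis unfolding \<S>_def .
qed

lemma set_pmf_of_set_subsets_card:
  assumes "m \<le> k"
  shows "set_pmf (pmf_of_set {S. S \<subseteq> {..<k} \<and> card S = m}) = {S. S \<subseteq> {..<k} \<and> card S = m}"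
proof (rule set_pmf_of_set)
  show "{S. S \<subseteq> {..<k} \<and> card S = m} \<noteq> {}"
    using assms by (intro ex_in_conv[THEN iffD1] exI[of _ "{..<m}"]) auto
  show "finite {S. S \<subseteq> {..<k} \<and> card S = m}"
    by (rule finite_subset[of _ "Pow {..<k}"]) auto
qed

lemma set_pmf_cluster_set_pmf:
  assumes "c \<le> k"
  shows "set_pmf (cluster_set_pmf k c) \<subseteq> Pow {..<k}"
proof -
  have "real c / real k \<in> {0..1}" using assms by (cases "k = 0") auto
  then have bin: "set_pmf (binomial_pmf k (real c / real k)) \<subseteq> {..k}"
    by (auto simp: set_pmf_binomial_eq)
  show ?thesis
    unfolding cluster_set_pmf_def set_bind_pmf
  proof (intro UN_least)
    fix m assume "m \<in> set_pmf (binomial_pmf k (real c / real k))"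
    then have "m \<le> k" using bin by auto
    then show "set_pmf (pmf_of_set {S. S \<subseteq> {..<k} \<and> card S = m}) \<subseteq> Pow {..<k}"
      by (subst set_pmf_of_set_subsets_card) auto
  qed
qed

lemma finite_set_pmf_cluster_set_pmf: "c \<le> k \<Longrightarrow> finite (set_pmf (cluster_set_pmf k c))"
  using set_pmf_cluster_set_pmf finite_subset by blast

lemma finite_set_pmf_random_clustering:
  assumes "finite E" "c \<le> k"
  shows "finite (set_pmf (random_clustering E k c))"
  unfolding random_clustering_def using assms finite_set_pmf_cluster_set_pmf
  by (auto simp: set_Pi_pmf)

lemma expectation_cluster_set_pmf_avoid:
  fixes I :: "nat set"
  assumes "I \<subseteq> {..<k}" "c \<le> k" "0 < k"
  shows "measure_pmf.expectation (cluster_set_pmf k c) (\<lambda>S. of_bool (S \<inter> I = {}))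
         \<le> (1 - real c / real k * (real (card I) / real k)) ^ k"
proof -
  define p where "p = real c / real k"
  define x where "x = real (card I) / real k"
  define \<S> where "\<S> m = {S. S \<subseteq> {..<k} \<and> card S = m}" for m
  have p: "p \<in> {0..1}" using assms(2,3) unfolding p_def by auto
  have "measure_pmf.expectation (cluster_set_pmf k c) (\<lambda>S. of_bool (S \<inter> I = {}) :: real)
      = (\<Sum>m\<le>k. pmf (binomial_pmf k p) m *\<^sub>R
           measure_pmf.expectation (pmf_of_set (\<S> m)) (\<lambda>S. of_bool (S \<inter> I = {})))"
    unfolding cluster_set_pmf_def p_def[symmetric] \<S>_def[symmetric]
  proof (rule pmf_expectation_bind)
    show "finite (set_pmf (pmf_of_set (\<S> m)))" if "m \<in> {..k}" for m
      using that unfolding \<S>_def by (subst set_pmf_of_set_subsets_card) (auto intro: finite_subset[of _ "Pow {..<k}"])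
    show "set_pmf (binomial_pmf k p) \<subseteq> {..k}"
      using p by (auto simp: set_pmf_binomial_eq)
  qed simp
  also have "\<dots> \<le> (\<Sum>m\<le>k. pmf (binomial_pmf k p) m * (1 - x) ^ m)"
    using expectation_pmf_of_subsets_avoid[OF assms(1) _ assms(3)]
    unfolding \<S>_def x_def by (intro sum_mono) (auto intro: mult_left_mono)
  also have "\<dots> = (\<Sum>m\<le>k. real (k choose m) * (p * (1 - x)) ^ m * (1 - p) ^ (k - m))"
    using p by (intro sum.cong) (auto simp: power_mult_distrib)
  also have "\<dots> = (p * (1 - x) + (1 - p)) ^ k"
    by (subst binomial_ring) simp
  also have "p * (1 - x) + (1 - p) = 1 - p * x"
    by (simp add: algebra_simps)
  finally show ?thesis unfolding p_def x_def .
qed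

lemma mult_one_minus_divide_power_le_one:
  fixes t :: real
  assumes "0 \<le> t" "t \<le> real n" "0 < n"
  shows "t * (1 - t / real n) ^ n \<le> 1"
proof -
  have "t * (1 - t / real n) ^ n \<le> t * exp (- t)"
    using assms by (intro mult_left_mono exp_ge_one_minus_x_over_n_power_n) auto
  also have "\<dots> \<le> 1"
  proof -
    have "t \<le> exp t" using exp_ge_add_one_self[of t] by linarith
    then show ?thesis by (simp add: exp_minus field_simps)
  qed
  finally show ?thesis .
qed

lemma fraction_mult_expectation_cluster_set_pmf_avoid_le:
  fixes I :: "nat set"
  assumes "I \<subseteq> {..<k}" "1 \<le> c" "c \<le> k"
  shows "real (card I) / real k * measure_pmf.expectation (cluster_set_pmf k c) (\<lambda>S. of_bool (S \<inter> I = {}))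
         \<le> 1 / real c"
proof -
  have "card I \<le> k" using assms(1) card_mono[of "{..<k}" I] by simp
  have "real (card I) / real k * measure_pmf.expectation (cluster_set_pmf k c) (\<lambda>S. of_bool (S \<inter> I = {}))
      \<le> real (card I) / real k * (1 - real c / real k * (real (card I) / real k)) ^ k"
    using expectation_cluster_set_pmf_avoid[OF assms(1,3)] assms(2,3)
    by (intro mult_left_mono) auto
  also have "\<dots> = 1 / real c * (real c * (real (card I) / real k) *
                   (1 - real c * (real (card I) / real k) / real k) ^ k)"
    using assms(2) by (simp add: field_simps)
  also have "\<dots> \<le> 1 / real c * 1"
  proof (intro mult_left_mono mult_one_minus_divide_power_le_one)
    show "real c * (real (card I) / real k) \<le> real k"
      using \<open>card I \<le> k\<close> assms(2,3) by (simp add: field_simps mult_mono)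
  qed (use assms(2,3) in auto)
  finally show ?thesis by simp
qed

section \<open>The expected weight of the union of the greedy matchings\<close>

lemma expectation_Pi_pmf_insert_le:
  fixes h :: "('a \<Rightarrow> 'b) \<Rightarrow> real"
  assumes "finite A" "x \<notin> A" "\<And>y. finite (set_pmf (p y))"
    and bound: "\<And>T. T \<in> set_pmf (Pi_pmf A dflt p) \<Longrightarrow>
                  measure_pmf.expectation (p x) (\<lambda>y. h (T(x := y))) \<le> b"
  shows "measure_pmf.expectation (Pi_pmf (insert x A) dflt p) h \<le> b"
proof -
  define P where "P = Pi_pmf A dflt p"
  have "finite (set_pmf P)"
    unfolding P_def using assms(1,3) by (auto simp: set_Pi_pmf)
  have "Pi_pmf (insert x A) dflt p = P \<bind> (\<lambda>T. map_pmf (\<lambda>y. T(x := y)) (p x))"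
    unfolding Pi_pmf_insert'[OF assms(1,2)] map_pmf_def P_def by (rule bind_commute_pmf)
  then have "measure_pmf.expectation (Pi_pmf (insert x A) dflt p) h
      = measure_pmf.expectation (P \<bind> (\<lambda>T. map_pmf (\<lambda>y. T(x := y)) (p x))) h"
    by simp
  also have "\<dots> = (\<Sum>T\<in>set_pmf P. pmf P T *\<^sub>R
                    measure_pmf.expectation (map_pmf (\<lambda>y. T(x := y)) (p x)) h)"
    by (rule pmf_expectation_bind) (use \<open>finite (set_pmf P)\<close> assms(3) in auto)
  also have "\<dots> = (\<Sum>T\<in>set_pmf P. pmf P T * measure_pmf.expectation (p x) (\<lambda>y. h (T(x := y))))"
    by simp
  also have "\<dots> \<le> (\<Sum>T\<in>set_pmf P. pmf P T * b)"
    using bound unfolding P_def by (intro sum_mono mult_left_mono) auto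
  also have "\<dots> = b"
    using sum_pmf_eq_1[OF \<open>finite (set_pmf P)\<close> subset_refl] by (simp add: sum_distrib_right[symmetric])
  finally show ?thesis .
qed

text \<open>Averaged over the clusters, the charging argument loses this fraction of w f.\<close>

definition loss_fraction :: "'a set list \<Rightarrow> nat \<Rightarrow> 'a set \<Rightarrow> ('a set \<Rightarrow> nat set) \<Rightarrow> real" where
  "loss_fraction \<pi> k f S =
     real (card (free_clusters \<pi> k S f)) / real k * of_bool (S f \<inter> free_clusters \<pi> k S f = {})"

lemma sum_matching_le_opt_greedy_union_loss:
  fixes w :: "'a set \<Rightarrow> real"
  assumes E: "finite E" "\<forall>e\<in>E. card e = 2 \<and> 0 \<le> w e"
    and \<pi>: "set \<pi> = E" "sorted_wrt (\<lambda>e f. w e \<ge> w f) \<pi>"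
    and Ms: "Ms \<subseteq> E" "is_matching Ms" and "0 < k"
  shows "sum w Ms \<le> 2 * opt w (greedy_union \<pi> k S) + (\<Sum>f\<in>Ms. w f * loss_fraction \<pi> k f S)"
proof -
  let ?H = "greedy_union \<pi> k S"
  have "finite Ms" using Ms(1) E(1) finite_subset by blast
  have "(\<Sum>f\<in>Ms - ?H. w f * real (card (free_clusters \<pi> k S f)) / real k)
      = (\<Sum>f\<in>Ms - ?H. w f * loss_fraction \<pi> k f S)"
  proof (rule sum.cong[OF refl])
    fix f assume "f \<in> Ms - ?H"
    then have "S f \<inter> free_clusters \<pi> k S f = {}"
      using Ms(1) \<pi>(1) by (intro disjoint_free_clusters_if_notin_greedy_union) auto
    then show "w f * real (card (free_clusters \<pi> k S f)) / real k = w f * loss_fraction \<pi> k f S"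
      unfolding loss_fraction_def by simp
  qed
  also have "\<dots> \<le> (\<Sum>f\<in>Ms. w f * loss_fraction \<pi> k f S)"
    unfolding loss_fraction_def using \<open>finite Ms\<close> Ms(1) E(2) by (intro sum_mono2) auto
  finally show ?thesis
    using sum_matching_le_opt_greedy_union[OF E \<pi> Ms \<open>0 < k\<close>, of S] by linarith
qed

lemma expectation_loss_fraction_le:
  assumes "finite E" "f \<in> E" "1 \<le> c" "c \<le> k"
  shows "measure_pmf.expectation (random_clustering E k c) (loss_fraction \<pi> k f) \<le> 1 / real c"
proof -
  have clustering_insert: "random_clustering E k c = Pi_pmf (insert f (E - {f})) {} (\<lambda>_. cluster_set_pmf k c)"
    unfolding random_clustering_def using assms(2) by (simp add: insert_absorb)
  show ?thesis
    unfolding clustering_insert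
  proof (rule expectation_Pi_pmf_insert_le)
    show "finite (set_pmf (cluster_set_pmf k c))"
      using assms(4) by (rule finite_set_pmf_cluster_set_pmf)
    fix T
    have "free_clusters \<pi> k T f \<subseteq> {..<k}" unfolding free_clusters_def by blast
    then show "measure_pmf.expectation (cluster_set_pmf k c) (\<lambda>y. loss_fraction \<pi> k f (T(f := y)))
        \<le> 1 / real c"
      using fraction_mult_expectation_cluster_set_pmf_avoid_le assms(3,4)
      unfolding loss_fraction_def free_clusters_fun_upd by simp
  qed (use assms(1) in auto)
qed

lemma expectation_opt_greedy_union_ge:
  fixes w :: "'a set \<Rightarrow> real"
  assumes E: "finite E" "\<forall>e\<in>E. card e = 2 \<and> 0 \<le> w e"
    and \<pi>: "set \<pi> = E" "sorted_wrt (\<lambda>e f. w e \<ge> w f) \<pi>"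
    and c: "1 \<le> c" "c \<le> k"
  shows "(1 - 1 / real c) / 2 * opt w E
           \<le> measure_pmf.expectation (random_clustering E k c) (\<lambda>S. opt w (greedy_union \<pi> k S))"
proof -
  obtain Ms where Ms: "Ms \<subseteq> E" "is_matching Ms" "sum w Ms = opt w E"
    using opt_attained[OF E(1)] .
  define RC where "RC = random_clustering E k c"
  define L where "L S = (\<Sum>f\<in>Ms. w f * loss_fraction \<pi> k f S)" for S
  have integrable: "integrable (measure_pmf RC) g" for g :: "_ \<Rightarrow> real"
    unfolding RC_def using finite_set_pmf_random_clustering[OF E(1) c(2)]
    by (rule integrable_measure_pmf_finite)
  have "0 < k" using c by linarith
  have pointwise: "(opt w E - L S) / 2 \<le> opt w (greedy_union \<pi> k S)" for S
  proof -
    have "opt w E - L S \<le> 2 * opt w (greedy_union \<pi> k S)"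
      using sum_matching_le_opt_greedy_union_loss[OF E \<pi> Ms(1,2) \<open>0 < k\<close>, of S] Ms(3)
      unfolding L_def by linarith
    then show ?thesis by simp
  qed
  have "measure_pmf.expectation RC L = (\<Sum>f\<in>Ms. w f * measure_pmf.expectation RC (loss_fraction \<pi> k f))"
    unfolding L_def by (simp add: Bochner_Integration.integral_sum integrable)
  also have "\<dots> \<le> (\<Sum>f\<in>Ms. w f * (1 / real c))"
    using expectation_loss_fraction_le[OF E(1) _ c] Ms(1) E(2)
    unfolding RC_def by (intro sum_mono mult_left_mono) auto
  also have "\<dots> = opt w E / real c"
    using Ms(3) by (simp add: sum_divide_distrib[symmetric])
  finally have "measure_pmf.expectation RC L \<le> opt w E / real c" .
  moreover have "measure_pmf.expectation RC (\<lambda>S. (opt w E - L S) / 2)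
      = (opt w E - measure_pmf.expectation RC L) / 2"
    by (simp add: Bochner_Integration.integral_diff integrable)
  moreover have "measure_pmf.expectation RC (\<lambda>S. (opt w E - L S) / 2)
      \<le> measure_pmf.expectation RC (\<lambda>S. opt w (greedy_union \<pi> k S))"
    using pointwise by (intro integral_mono integrable)
  ultimately show ?thesis
    unfolding RC_def by (simp add: field_simps)
qed

lemma simple_graph_on_edges:
  assumes "simple_graph_on V E"
  shows "finite E" "\<forall>e\<in>E. card e = 2"
proof -
  have "E \<subseteq> Pow V" "finite V" using assms unfolding simple_graph_on_def by blast+
  then show "finite E" by (meson finite_Pow_iff finite_subset)
  show "\<forall>e\<in>E. card e = 2" using assms unfolding simple_graph_on_def by auto
qed

theorem lemma3p2:
  shows "\<exists>C::real. C > 0 \<and>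
    (\<forall>(V::nat set) (E::nat set set) (w::nat set \<Rightarrow> real) (k::nat) (c::nat) (\<pi>::nat set list).
       simple_graph_on V E \<longrightarrow> (\<forall>e\<in>E. w e \<ge> 0) \<longrightarrow> 2 \<le> c \<longrightarrow> c \<le> k \<longrightarrow>
       distinct \<pi> \<longrightarrow> set \<pi> = E \<longrightarrow> sorted_wrt (\<lambda>e f. w e \<ge> w f) \<pi> \<longrightarrow>
       measure_pmf.expectation (random_clustering E k c) (\<lambda>S. opt w (greedy_union \<pi> k S))
         \<ge> (1/2 - C * ln (real c) / real c) * opt w E)"
proof (intro exI[of _ "1 / (2 * ln 2)"] conjI allI impI)
  show "0 < 1 / (2 * ln (2::real))" by simp
  fix V :: "nat set" and E :: "nat set set" and w :: "nat set \<Rightarrow> real" and k c :: nat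
    and \<pi> :: "nat set list"
  assume G: "simple_graph_on V E" and w: "\<forall>e\<in>E. w e \<ge> 0" and "2 \<le> c" "c \<le> k"
    and "distinct \<pi>" "set \<pi> = E" "sorted_wrt (\<lambda>e f. w e \<ge> w f) \<pi>"
  have "1 / 2 \<le> 1 / (2 * ln 2) * ln (real c)"
    using \<open>2 \<le> c\<close> by (simp add: field_simps)
  then have "1 / 2 - 1 / (2 * ln 2) * ln (real c) / real c \<le> (1 - 1 / real c) / 2"
    using \<open>2 \<le> c\<close> by (simp add: field_simps)
  then have "(1 / 2 - 1 / (2 * ln 2) * ln (real c) / real c) * opt w E \<le> (1 - 1 / real c) / 2 * opt w E"
    using opt_nonneg[OF simple_graph_on_edges(1)[OF G]] by (rule mult_right_mono)
  also have "\<dots> \<le> measure_pmf.expectation (random_clustering E k c) (\<lambda>S. opt w (greedy_union \<pi> k S))"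
    using simple_graph_on_edges[OF G] w \<open>2 \<le> c\<close> \<open>c \<le> k\<close> \<open>set \<pi> = E\<close> \<open>sorted_wrt (\<lambda>e f. w e \<ge> w f) \<pi>\<close>
    by (intro expectation_opt_greedy_union_ge) auto
  finally show "(1 / 2 - 1 / (2 * ln 2) * ln (real c) / real c) * opt w E
      \<le> measure_pmf.expectation (random_clustering E k c) (\<lambda>S. opt w (greedy_union \<pi> k S))" .
qed

end
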